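(* Let $V$ be a Banach $\mathbb O$-bimodule, $T\in\mathscr B_{\mathcal{RO}}(V)$, $v\in\operatorname{Re}V$ and $\phi\in V^{*_{\mathbb O}}$. Set $g(s)=\phi\big((R_s-T)^{\circledcirc-}(v)\big)$ for $s\in\rho^*(T)$. Then for every $J\in\mathbb S$, $g$ is continuously differentiable on the open set $\rho_J^*(T)\subseteq\mathbb C_J$ and, writing $s=x+yJ$, satisfies $\frac{\partial g}{\partial x}(s)+\frac{\partial g}{\partial y}(s)\,J=0$ there; i.e. $g$ is right slice regular on the pull-back resolvent set.
   Context: $\mathbb O$ is the real octonion algebra with basis $e_0=1,\dots,e_7$; $\mathbb S=\{J\in\mathbb O:J^2=-1\}$, $\mathbb C_J=\mathbb R+\mathbb RJ$. An $\mathbb O$-bimodule is a real vector space $M$ with real-bilinear left and right multiplications by $\mathbb O$ (with $1x=x1=x$) whose associators $[p,q,x]=(pq)x-p(qx)$, $[p,x,q]=(px)q-p(xq)$, $[x,p,q]=(xp)q-x(pq)$ satisfy $[p,q,x]=[q,x,p]=[x,p,q]=-[q,p,x]$. Its real part is $\operatorname{Re}M=\{m: pm=mp,\ [p,q,m]=0\ \forall p,q\}$, and every $x$ decomposes uniquely as $\sum_ix_ie_i$ with $x_i\in\operatorname{Re}M$. A Banach $\mathbb O$-bimodule is one with a complete norm with $\|px\|=\|xp\|=|p|\|x\|$; $\mathbb O$ itself is one. $V^{*_{\mathbb O}}$ is the set of continuous octonionic linear functionals $\phi:V\to\mathbb O$ ($\phi(xp)=\phi(x)p$, equivalently $\phi(px)=p\phi(x)$).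 $\mathscr B_{\mathbb R}(V)$: bounded real-linear operators; invertible means invertible in $\mathscr B_{\mathbb R}(V)$; $R_sv=vs$. $\mathscr B_{\mathcal{RO}}(V)$: bounded real-linear $f$ with $\operatorname{Re}(f(x)p-f(xp))=0$ for all $p,x$, where $\operatorname{Re}x$ is the $e_0$-component above. For invertible $S$, $S^{\circledcirc-}=\operatorname{ext}(S^{-1}|_{\operatorname{Re}V})$ where $(\operatorname{ext}h)(\sum_ix_ie_i)=\sum_ih(x_i)e_i$ ($x_i\in\operatorname{Re}V$); in particular $S^{\circledcirc-}(v)=S^{-1}(v)$ for $v\in\operatorname{Re}V$. $S$ is $\mathbb C_J$-extendable power associative if $S^n(w\lambda)=S^n(w)\lambda$ for all $n\ge1$, $w\in\operatorname{Re}V$, $\lambda\in\mathbb C_J$. $\rho_J^*(T)=\{s\in\mathbb C_J: R_s-T$ invertible and $(R_s-T)^{-1}$ $\mathbb C_J$-extendable power associative$\}$ (open in $\mathbb C_J$), $\rho^*(T)=\bigcup_J\rho_J^*(T)$. *)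

theory Defs
  imports "HOL-Analysis.Analysis"
begin

text \<open>Quaternions as pairs of complex numbers, octonions as pairs of quaternions.
  The product norm of Product_Vector is then the Euclidean norm on R^8.\<close>

type_synonym quat = "complex \<times> complex"
type_synonym oct = "quat \<times> quat"

definition qcnj :: "quat \<Rightarrow> quat" where
  "qcnj p = (cnj (fst p), - snd p)"

definition qmul :: "quat \<Rightarrow> quat \<Rightarrow> quat" where
  "qmul p q = (fst p * fst q - cnj (snd q) * snd p, snd q * fst p + snd p * cnj (fst q))"

definition ocnj :: "oct \<Rightarrow> oct" where
  "ocnj p = (qcnj (fst p), - snd p)"

definition omul :: "oct \<Rightarrow> oct \<Rightarrow> oct" where
  "omul p q = (qmul (fst p) (fst q) - qmul (qcnj (snd q)) (snd p),
               qmul (snd q) (fst p) + qmul (snd p) (qcnj (fst q)))"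

definition oone :: oct where
  "oone = ((1, 0), (0, 0))"

definition oe :: "nat \<Rightarrow> oct" where
  "oe i = (if i = 0 then ((1, 0), (0, 0))
      else if i = 1 then ((\<i>, 0), (0, 0))
      else if i = 2 then ((0, 1), (0, 0))
      else if i = 3 then ((0, \<i>), (0, 0))
      else if i = 4 then ((0, 0), (1, 0))
      else if i = 5 then ((0, 0), (\<i>, 0))
      else if i = 6 then ((0, 0), (0, 1))
      else if i = 7 then ((0, 0), (0, \<i>))
      else 0)"

definition osphere :: "oct set" where
  "osphere = {J. omul J J = - oone}"

definition CJ :: "oct \<Rightarrow> oct set" where
  "CJ J = {x *\<^sub>R oone + y *\<^sub>R J | x y. True}"

definition assocL :: "(oct \<Rightarrow> 'v::real_vector \<Rightarrow> 'v) \<Rightarrow> oct \<Rightarrow> oct \<Rightarrow> 'v \<Rightarrow> 'v" where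
  "assocL lm p q x = lm (omul p q) x - lm p (lm q x)"

definition assocM :: "(oct \<Rightarrow> 'v::real_vector \<Rightarrow> 'v) \<Rightarrow> ('v \<Rightarrow> oct \<Rightarrow> 'v) \<Rightarrow> oct \<Rightarrow> 'v \<Rightarrow> oct \<Rightarrow> 'v" where
  "assocM lm rm p x q = rm (lm p x) q - lm p (rm x q)"

definition assocR :: "('v::real_vector \<Rightarrow> oct \<Rightarrow> 'v) \<Rightarrow> 'v \<Rightarrow> oct \<Rightarrow> oct \<Rightarrow> 'v" where
  "assocR rm x p q = rm (rm x p) q - rm x (omul p q)"

definition oct_bimodule :: "(oct \<Rightarrow> 'v::real_vector \<Rightarrow> 'v) \<Rightarrow> ('v \<Rightarrow> oct \<Rightarrow> 'v) \<Rightarrow> bool" where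
  "oct_bimodule lm rm \<longleftrightarrow>
     (\<forall>p. linear (lm p)) \<and> (\<forall>x. linear (\<lambda>p. lm p x)) \<and>
     (\<forall>p. linear (\<lambda>x. rm x p)) \<and> (\<forall>x. linear (rm x)) \<and>
     (\<forall>x. lm oone x = x) \<and> (\<forall>x. rm x oone = x) \<and>
     (\<forall>p q x. assocL lm p q x = assocM lm rm q x p \<and>
              assocM lm rm q x p = assocR rm x p q \<and>
              assocR rm x p q = - assocL lm q p x)"

definition banach_oct_bimodule :: "(oct \<Rightarrow> 'v::banach \<Rightarrow> 'v) \<Rightarrow> ('v \<Rightarrow> oct \<Rightarrow> 'v) \<Rightarrow> bool" where
  "banach_oct_bimodule lm rm \<longleftrightarrow> oct_bimodule lm rm \<and>
     (\<forall>p x. norm (lm p x) = norm p * norm x \<and> norm (rm x p) = norm p * norm x)"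

definition ReM :: "(oct \<Rightarrow> 'v::real_vector \<Rightarrow> 'v) \<Rightarrow> ('v \<Rightarrow> oct \<Rightarrow> 'v) \<Rightarrow> 'v set" where
  "ReM lm rm = {m. (\<forall>p. lm p m = rm m p) \<and> (\<forall>p q. assocL lm p q m = 0)}"

definition comps :: "(oct \<Rightarrow> 'v::real_vector \<Rightarrow> 'v) \<Rightarrow> ('v \<Rightarrow> oct \<Rightarrow> 'v) \<Rightarrow> 'v \<Rightarrow> nat \<Rightarrow> 'v" where
  "comps lm rm x = (THE c. (\<forall>i<8. c i \<in> ReM lm rm) \<and> (\<forall>i\<ge>8. c i = 0) \<and>
                         x = (\<Sum>i<8. rm (c i) (oe i)))"

definition reprt :: "(oct \<Rightarrow> 'v::real_vector \<Rightarrow> 'v) \<Rightarrow> ('v \<Rightarrow> oct \<Rightarrow> 'v) \<Rightarrow> 'v \<Rightarrow> 'v" where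
  "reprt lm rm x = comps lm rm x 0"

definition oct_dual :: "(oct \<Rightarrow> 'v::real_normed_vector \<Rightarrow> 'v) \<Rightarrow> ('v \<Rightarrow> oct \<Rightarrow> 'v) \<Rightarrow> ('v \<Rightarrow> oct) set" where
  "oct_dual lm rm = {\<phi>. bounded_linear \<phi> \<and> (\<forall>x p. \<phi> (rm x p) = omul (\<phi> x) p)}"

definition BRO :: "(oct \<Rightarrow> 'v::real_normed_vector \<Rightarrow> 'v) \<Rightarrow> ('v \<Rightarrow> oct \<Rightarrow> 'v) \<Rightarrow> ('v \<Rightarrow> 'v) set" where
  "BRO lm rm = {f. bounded_linear f \<and> (\<forall>p x. reprt lm rm (rm (f x) p - f (rm x p)) = 0)}"

definition invertible_op :: "('v::real_normed_vector \<Rightarrow> 'v) \<Rightarrow> bool" where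
  "invertible_op S \<longleftrightarrow> bounded_linear S \<and>
     (\<exists>S'. bounded_linear S' \<and> S' \<circ> S = id \<and> S \<circ> S' = id)"

definition ext_op :: "(oct \<Rightarrow> 'v::real_vector \<Rightarrow> 'v) \<Rightarrow> ('v \<Rightarrow> oct \<Rightarrow> 'v) \<Rightarrow> ('v \<Rightarrow> 'v) \<Rightarrow> 'v \<Rightarrow> 'v" where
  "ext_op lm rm h x = (\<Sum>i<8. rm (h (comps lm rm x i)) (oe i))"

text \<open>S^{circledcirc-} = ext (S^{-1} restricted to Re V).\<close>
definition circ_inv :: "(oct \<Rightarrow> 'v::real_vector \<Rightarrow> 'v) \<Rightarrow> ('v \<Rightarrow> oct \<Rightarrow> 'v) \<Rightarrow> ('v \<Rightarrow> 'v) \<Rightarrow> 'v \<Rightarrow> 'v" where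
  "circ_inv lm rm S = ext_op lm rm (inv S)"

definition CJ_ext_pow_assoc :: "(oct \<Rightarrow> 'v::real_vector \<Rightarrow> 'v) \<Rightarrow> ('v \<Rightarrow> oct \<Rightarrow> 'v) \<Rightarrow> oct \<Rightarrow> ('v \<Rightarrow> 'v) \<Rightarrow> bool" where
  "CJ_ext_pow_assoc lm rm J S \<longleftrightarrow>
     (\<forall>n\<ge>1. \<forall>w\<in>ReM lm rm. \<forall>c\<in>CJ J. (S ^^ n) (rm w c) = rm ((S ^^ n) w) c)"

definition rhoJ :: "(oct \<Rightarrow> 'v::real_normed_vector \<Rightarrow> 'v) \<Rightarrow> ('v \<Rightarrow> oct \<Rightarrow> 'v) \<Rightarrow> ('v \<Rightarrow> 'v) \<Rightarrow> oct \<Rightarrow> oct set" where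
  "rhoJ lm rm T J = {s \<in> CJ J. invertible_op (\<lambda>w. rm w s - T w) \<and>
       CJ_ext_pow_assoc lm rm J (inv (\<lambda>w. rm w s - T w))}"

definition rho :: "(oct \<Rightarrow> 'v::real_normed_vector \<Rightarrow> 'v) \<Rightarrow> ('v \<Rightarrow> oct \<Rightarrow> 'v) \<Rightarrow> ('v \<Rightarrow> 'v) \<Rightarrow> oct set" where
  "rho lm rm T = (\<Union>J\<in>osphere. rhoJ lm rm T J)"

end

theory Submission
  imports Defs
begin

text \<open>Write \<open>R\<^sub>J\<close> for right multiplication by \<open>J\<close>. Since \<open>J\<^sup>2 = -1\<close> and bimodules are right
  alternative, \<open>R\<^sub>J\<^sup>2 = -1\<close>, and for \<open>s = x + yJ\<close> the operator \<open>R\<^sub>s - T\<close> is the real pencil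
  \<open>A(x, y) = x + y R\<^sub>J - T\<close>. Thus \<open>\<rho>\<^sub>J\<^sup>*(T)\<close> becomes the set of \<open>(x, y)\<close> where \<open>A(x, y)\<close> is
  invertible and the powers of its inverse commute with \<open>R\<^sub>J\<close> on \<open>Re V\<close>, and since \<open>v\<close> is real,
  \<open>g(x + yJ) = \<phi>(A(x, y)\<inverse> v)\<close>.

  The perturbation identity \<open>A(z')\<inverse> = A(z)\<inverse> - A(z')\<inverse> (A(z') - A(z)) A(z)\<inverse>\<close> gives openness,
  continuity of the resolvent and its derivative \<open>k \<mapsto> -A\<inverse>(k\<^sub>1 + k\<^sub>2 R\<^sub>J)A\<inverse>\<close>. The commutation
  with \<open>R\<^sub>J\<close> survives small perturbations because the perturbed inverse is a contraction fixed point,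
  which can be sought in the closed subspace on which all powers of \<open>A(z)\<inverse>\<close> commute with \<open>R\<^sub>J\<close>.
  Finally \<open>\<partial>\<^sub>y g = -\<phi>(A\<inverse> R\<^sub>J A\<inverse> v) = -\<phi>(A\<^sup>-\<^sup>2 v) J = (\<partial>\<^sub>x g) J\<close>, so
  \<open>\<partial>\<^sub>x g + (\<partial>\<^sub>y g) J = \<partial>\<^sub>x g + ((\<partial>\<^sub>x g) J) J = 0\<close> by alternativity of \<open>\<O>\<close>.\<close>

section \<open>Octonion arithmetic\<close>

lemma omul_uminus_left: "omul (- p) q = - omul p q"
  by (cases p, cases q) (simp add: omul_def qmul_def qcnj_def algebra_simps)

lemma omul_right_alternative: "omul (omul p q) q = omul p (omul q q)"
  by (cases p, cases q) (auto simp: omul_def qmul_def qcnj_def complex_eq_iff algebra_simps)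

lemma omul_osphere_twice:
  assumes "J \<in> osphere"
  shows "omul (omul p J) J = - p"
proof -
  have "omul p (- oone) = - p"
    by (cases p) (simp add: omul_def qmul_def qcnj_def oone_def prod_eq_iff)
  then show ?thesis
    using assms by (simp add: omul_right_alternative osphere_def)
qed

lemma oe_0: "oe 0 = oone"
  by (simp add: oe_def oone_def)

text \<open>In \<open>\<O>\<close> one has \<open>\<Sum>\<^sub>j e\<^sub>j x e\<^sub>j\<^sup>* + 4x = 12 Re x\<close>; here it is applied to
  \<open>x = e\<^sub>i e\<^sub>k\<^sup>*\<close>, whose real part is \<open>\<delta>\<^sub>i\<^sub>k\<close>.\<close>
lemma oe_twelve_re:
  assumes "i < 8" and "k < 8"
  shows "(\<Sum>j<8. omul (oe j) (omul (omul (oe i) (ocnj (oe k))) (ocnj (oe j))))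
           + 4 *\<^sub>R omul (oe i) (ocnj (oe k)) = (if i = k then 12 else 0) *\<^sub>R oone"
proof -
  have sum8: "(\<Sum>j<(8::nat). f j) = f 0 + f 1 + f 2 + f 3 + f 4 + f 5 + f 6 + (f 7 :: oct)" for f
    by (simp add: eval_nat_numeral lessThan_Suc add_ac)
  have "i \<in> {..<8}" "k \<in> {..<8}"
    using assms by auto
  then show ?thesis
    unfolding sum8 by (simp add: lessThan_nat_numeral; elim disjE;
        simp add: oe_def omul_def qmul_def qcnj_def ocnj_def oone_def complex_eq_iff zero_prod_def)
qed

section \<open>Small perturbations of invertible operators\<close>

lemma invertible_opD:
  assumes "invertible_op A"
  shows "bounded_linear (inv A)" and "inv A (A w) = w" and "A (inv A w) = w"
proof -
  obtain S where S: "bounded_linear S" "S \<circ> A = id" "A \<circ> S = id"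
    using assms unfolding invertible_op_def by blast
  have inv: "inv A = S"
    using inv_unique_comp[OF S(3) S(2)] .
  with S show "bounded_linear (inv A)"
    by simp
  from inv S show "inv A (A w) = w" "A (inv A w) = w"
    by (simp_all add: fun_eq_iff)
qed

lemma invertible_op_inv_eqI:
  assumes "invertible_op A" and "A u = y"
  shows "u = inv A y"
  using assms invertible_opD(2) by metis

lemma inv_add_eq:
  assumes A: "invertible_op A" and B: "invertible_op (\<lambda>w. A w + D w)"
  shows "inv (\<lambda>w. A w + D w) w = inv A w - inv (\<lambda>w. A w + D w) (D (inv A w))"
proof -
  let ?S' = "inv (\<lambda>w. A w + D w)"
  have "inv A w = ?S' (w + D (inv A w))"
    by (rule invertible_op_inv_eqI[OF B]) (simp add: invertible_opD(3)[OF A])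
  also have "\<dots> = ?S' w + ?S' (D (inv A w))"
    using linear_add[OF bounded_linear.linear[OF invertible_opD(1)[OF B]]] .
  finally show ?thesis
    by (simp add: eq_diff_eq)
qed

lemma bounded_linear_funpow:
  fixes S :: "'a::real_normed_vector \<Rightarrow> 'a"
  assumes "bounded_linear S"
  shows "bounded_linear (S ^^ n)"
proof (induction n)
  case 0
  then show ?case
    by (simp add: id_def)
next
  case (Suc n)
  then show ?case
    using bounded_linear_compose[OF assms] by (simp add: o_def)
qed

text \<open>The inverse of \<open>A + D\<close> is built as the fixed point of the contraction
  \<open>u \<mapsto> A\<inverse> y - A\<inverse> D u\<close>.\<close>
locale small_perturbation =
  fixes A D :: "'v::banach \<Rightarrow> 'v" and M d :: real
  assumes invertible_A: "invertible_op A" and bounded_linear_D: "bounded_linear D"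
    and norm_inv_A: "\<And>w. norm (inv A w) \<le> M * norm w" and norm_D: "\<And>w. norm (D w) \<le> d * norm w"
    and small: "M * d \<le> 1/2" and M_nonneg: "0 \<le> M"
begin

lemma linear_inv_A: "linear (inv A)"
  using invertible_opD(1)[OF invertible_A] by (rule bounded_linear.linear)

lemma linear_D: "linear D"
  using bounded_linear_D by (rule bounded_linear.linear)

lemma norm_inv_A_D_le: "norm (inv A (D u)) \<le> 1/2 * norm u"
proof -
  have "norm (inv A (D u)) \<le> M * (d * norm u)"
    using norm_inv_A norm_D M_nonneg by (meson mult_left_mono order_trans)
  also have "\<dots> \<le> 1/2 * norm u"
    using mult_right_mono[OF small, of "norm u"] by (simp add: mult.assoc)
  finally show ?thesis .
qed

lemma fixpoint_in_subspace:
  assumes G: "closed G" "subspace G" "inv A ` G \<subseteq> G" "D ` G \<subseteq> G" and y: "y \<in> G"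
  shows "\<exists>u\<in>G. u = inv A y - inv A (D u)"
proof -
  have "\<exists>!u\<in>G. inv A y - inv A (D u) = u"
  proof (rule Banach_fix[where c="1/2"])
    show "complete G"
      using G(1) complete_eq_closed by blast
    show "(\<lambda>u. inv A y - inv A (D u)) ` G \<subseteq> G"
      using G y by (auto intro!: subspace_diff)
    show "dist (inv A y - inv A (D a)) (inv A y - inv A (D b)) \<le> 1/2 * dist a b" for a b
      using norm_inv_A_D_le[of "b - a"]
      by (simp add: dist_norm norm_minus_commute linear_diff[OF linear_inv_A] linear_diff[OF linear_D])
  qed (use y in auto)
  then show ?thesis
    by metis
qed

lemma fixpoint_unique:
  assumes "u1 = inv A y - inv A (D u1)" and "u2 = inv A y - inv A (D u2)"
  shows "u1 = u2"
proof -
  have "u1 - u2 = (inv A y - inv A (D u1)) - (inv A y - inv A (D u2))"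
    using assms by (rule arg_cong2[where f = minus])
  also have "\<dots> = inv A (D (u2 - u1))"
    by (simp add: linear_diff[OF linear_inv_A] linear_diff[OF linear_D])
  finally have "norm (u1 - u2) \<le> 1/2 * norm (u1 - u2)"
    using norm_inv_A_D_le[of "u2 - u1"] by (simp add: norm_minus_commute)
  then show ?thesis
    by simp
qed

lemma fixpoint_norm_le:
  assumes "u = inv A y - inv A (D u)"
  shows "norm u \<le> 2 * M * norm y"
proof -
  have "norm u \<le> M * norm y + 1/2 * norm u"
    using assms norm_inv_A[of y] norm_inv_A_D_le[of u] by (metis add_mono norm_triangle_ineq4 order_trans)
  then show ?thesis
    by simp
qed

lemma fixpoint_solves:
  assumes "u = inv A y - inv A (D u)"
  shows "A u + D u = y"
proof -
  have "A u = y - D u"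
    using arg_cong[OF assms, of A] bounded_linear.linear[OF conjunct1[OF invertible_A[unfolded invertible_op_def]]]
    by (simp add: linear_diff invertible_opD(3)[OF invertible_A])
  then show ?thesis
    by simp
qed

lemma invertible_op_add: "invertible_op (\<lambda>w. A w + D w)"
proof -
  let ?B = "\<lambda>w. A w + D w"
  define S' where "S' y = (SOME u. u = inv A y - inv A (D u))" for y
  have S'_eq: "S' y = inv A y - inv A (D (S' y))" for y
    using fixpoint_in_subspace[OF closed_UNIV subspace_UNIV]
    unfolding S'_def by (metis (mono_tags, lifting) UNIV_I someI_ex subset_UNIV)
  have BS': "?B (S' y) = y" for y
    using fixpoint_solves[OF S'_eq] .
  have S'B: "S' (?B u) = u" for u
  proof -
    have "u = inv A (?B u) - inv A (D u)"
      using linear_add[OF linear_inv_A] by (simp add: invertible_opD(2)[OF invertible_A])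
    then show ?thesis
      using fixpoint_unique[OF S'_eq] by metis
  qed
  have lB: "linear ?B"
    using bounded_linear.linear[OF conjunct1[OF invertible_A[unfolded invertible_op_def]]] linear_D
    by (rule linear_compose_add)
  have "linear S'"
    by (rule linearI) (metis BS' S'B linear_add[OF lB], metis BS' S'B linear_scale[OF lB])
  then have "bounded_linear S'"
    using fixpoint_norm_le[OF S'_eq]
    by (intro bounded_linear_intro[where K="2*M"]) (auto simp: linear_add linear_scale mult.commute)
  then show ?thesis
    unfolding invertible_op_def
    using bounded_linear_add[OF conjunct1[OF invertible_A[unfolded invertible_op_def]] bounded_linear_D]
      BS' S'B
    by (auto intro!: exI[of _ S'] simp: fun_eq_iff)
qed

lemma fixpoint_eq_inv_add:
  assumes "u = inv A y - inv A (D u)"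
  shows "u = inv (\<lambda>w. A w + D w) y"
  using invertible_op_inv_eqI[OF invertible_op_add fixpoint_solves[OF assms]] .

lemma norm_inv_add_le: "norm (inv (\<lambda>w. A w + D w) y) \<le> 2 * M * norm y"
proof -
  obtain u where "u = inv A y - inv A (D u)"
    using fixpoint_in_subspace[OF closed_UNIV subspace_UNIV] by blast
  then show ?thesis
    using fixpoint_norm_le fixpoint_eq_inv_add by metis
qed

text \<open>The fixed point can be sought inside any closed subspace invariant under \<open>A\<inverse>\<close> and \<open>D\<close>.\<close>
lemma inv_add_commute:
  assumes R: "linear R"
    and G: "closed G" "subspace G" "inv A ` G \<subseteq> G" "D ` G \<subseteq> G" "R ` G \<subseteq> G"
    and SR: "\<And>u. u \<in> G \<Longrightarrow> inv A (R u) = R (inv A u)" and DR: "\<And>u. D (R u) = R (D u)"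
    and y: "y \<in> G"
  shows "inv (\<lambda>w. A w + D w) y \<in> G" and "inv (\<lambda>w. A w + D w) (R y) = R (inv (\<lambda>w. A w + D w) y)"
proof -
  obtain u where u: "u \<in> G" "u = inv A y - inv A (D u)"
    using fixpoint_in_subspace[OF G(1-4) y] by blast
  have "R u = R (inv A y) - R (inv A (D u))"
    using u(2) linear_diff[OF R] by metis
  also have "\<dots> = inv A (R y) - inv A (D (R u))"
    using G(4) u(1) y by (simp add: SR DR image_subset_iff)
  finally have "R u = inv (\<lambda>w. A w + D w) (R y)"
    by (rule fixpoint_eq_inv_add)
  with u fixpoint_eq_inv_add[OF u(2)] show "inv (\<lambda>w. A w + D w) y \<in> G"
    and "inv (\<lambda>w. A w + D w) (R y) = R (inv (\<lambda>w. A w + D w) y)"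
    by simp_all
qed

end

definition pow_commuting :: "('v \<Rightarrow> 'v) \<Rightarrow> ('v \<Rightarrow> 'v) \<Rightarrow> 'v set" where
  "pow_commuting S R = {u. \<forall>n. (S ^^ n) (R u) = R ((S ^^ n) u)}"

lemma pow_commuting_commute:
  assumes "u \<in> pow_commuting S R"
  shows "S (R u) = R (S u)"
proof -
  have "(S ^^ 1) (R u) = R ((S ^^ 1) u)"
    using assms unfolding pow_commuting_def by blast
  then show ?thesis
    by simp
qed

lemma pow_commuting_image_self: "S ` pow_commuting S R \<subseteq> pow_commuting S R"
proof (rule image_subsetI)
  fix u assume u: "u \<in> pow_commuting S R"
  have "(S ^^ n) (R (S u)) = R ((S ^^ n) (S u))" for n
  proof -
    have "(S ^^ n) (R (S u)) = (S ^^ Suc n) (R u)"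
      using pow_commuting_commute[OF u] by (simp only: funpow_Suc_right o_apply)
    also have "\<dots> = R ((S ^^ Suc n) u)"
      using u unfolding pow_commuting_def by blast
    also have "\<dots> = R ((S ^^ n) (S u))"
      by (simp only: funpow_Suc_right o_apply)
    finally show ?thesis .
  qed
  then show "S u \<in> pow_commuting S R"
    by (simp add: pow_commuting_def)
qed

lemma pow_commuting_image_anti_involution:
  assumes "bounded_linear S" and "linear R" and "\<And>w. R (R w) = - w"
  shows "R ` pow_commuting S R \<subseteq> pow_commuting S R"
proof (rule image_subsetI)
  fix u assume u: "u \<in> pow_commuting S R"
  note lSn = bounded_linear.linear[OF bounded_linear_funpow[OF assms(1)]]
  have "(S ^^ n) (R (R u)) = R ((S ^^ n) (R u))" for n
  proof -
    have "(S ^^ n) (R (R u)) = - (S ^^ n) u"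
      by (simp add: assms(3) linear_neg[OF lSn])
    also have "\<dots> = R (R ((S ^^ n) u))"
      by (simp add: assms(3))
    also have "\<dots> = R ((S ^^ n) (R u))"
      using u unfolding pow_commuting_def by simp
    finally show ?thesis .
  qed
  then show "R u \<in> pow_commuting S R"
    unfolding pow_commuting_def by blast
qed

lemma closed_pow_commuting:
  assumes "bounded_linear S" and "bounded_linear R"
  shows "closed (pow_commuting S R)"
proof -
  have "pow_commuting S R = (\<Inter>n. {u. (S ^^ n) (R u) = R ((S ^^ n) u)})"
    unfolding pow_commuting_def by auto
  moreover have "closed {u. (S ^^ n) (R u) = R ((S ^^ n) u)}" for n
    using assms
    by (intro closed_Collect_eq linear_continuous_on bounded_linear_compose[of "S ^^ n" R]
        bounded_linear_compose[of R "S ^^ n"] bounded_linear_funpow)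
  ultimately show ?thesis
    by auto
qed

lemma subspace_pow_commuting:
  assumes "bounded_linear S" and "linear R"
  shows "subspace (pow_commuting S R)"
proof -
  note lSn = bounded_linear.linear[OF bounded_linear_funpow[OF assms(1)]]
  show ?thesis
    unfolding subspace_def pow_commuting_def
    by (simp add: linear_0[OF lSn] linear_0[OF assms(2)] linear_add[OF lSn] linear_add[OF assms(2)]
        linear_scale[OF lSn] linear_scale[OF assms(2)])
qed

lemma subset_pow_commuting:
  assumes "S ` G \<subseteq> G" and "\<And>u. u \<in> G \<Longrightarrow> S (R u) = R (S u)"
  shows "G \<subseteq> pow_commuting S R"
proof
  fix u assume "u \<in> G"
  have "(S ^^ n) u \<in> G \<and> (S ^^ n) (R u) = R ((S ^^ n) u)" for n
  proof (induction n)
    case 0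
    then show ?case
      using \<open>u \<in> G\<close> by simp
  next
    case (Suc n)
    then show ?case
      using assms by (simp add: image_subset_iff)
  qed
  then show "u \<in> pow_commuting S R"
    by (simp add: pow_commuting_def)
qed

section \<open>The pencil \<open>x + y R\<^sub>J - T\<close>\<close>

lemma has_derivative_of_quadratic_remainder:
  fixes f :: "'a::real_normed_vector \<Rightarrow> 'b::real_normed_vector"
  assumes L: "bounded_linear L" and e: "0 < e"
    and remainder: "\<And>h. norm h < e \<Longrightarrow> norm (f (x + h) - f x - L h) \<le> C * (norm h)\<^sup>2"
  shows "(f has_derivative L) (at x)"
proof -
  have "((\<lambda>h. norm (f (x + h) - f x - L h) / norm h) \<longlongrightarrow> 0) (at 0)"
  proof (rule Lim_null_comparison)
    have "norm (norm (f (x + h) - f x - L h) / norm h) \<le> C * norm h" if "h \<noteq> 0" "norm h < e" for h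
      using remainder[OF that(2)] that(1) by (simp add: divide_le_eq power2_eq_square mult.assoc)
    then show "\<forall>\<^sub>F h in at 0. norm (norm (f (x + h) - f x - L h) / norm h) \<le> C * norm h"
      unfolding eventually_at using e by (auto intro!: exI[of _ e])
    show "((\<lambda>h. C * norm h) \<longlongrightarrow> 0) (at 0)"
      by (auto intro!: tendsto_eq_intros)
  qed
  then show ?thesis
    using L by (simp add: has_derivative_at)
qed

definition cmult :: "('v::real_vector \<Rightarrow> 'v) \<Rightarrow> real \<times> real \<Rightarrow> 'v \<Rightarrow> 'v" where
  "cmult RJ k w = fst k *\<^sub>R w + snd k *\<^sub>R RJ w"

definition pencil :: "('v::real_vector \<Rightarrow> 'v) \<Rightarrow> ('v \<Rightarrow> 'v) \<Rightarrow> real \<times> real \<Rightarrow> 'v \<Rightarrow> 'v" where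
  "pencil RJ T z w = cmult RJ z w - T w"

text \<open>With \<open>RJ = R\<^sub>J\<close> and \<open>W = Re V\<close>, \<open>cmult RJ (x, y)\<close> is right multiplication by
  \<open>x + yJ\<close>, and the resolvent points are the coordinates of \<open>\<rho>\<^sub>J\<^sup>*(T)\<close>.\<close>
definition resolvent_point ::
    "('v::real_normed_vector \<Rightarrow> 'v) \<Rightarrow> ('v \<Rightarrow> 'v) \<Rightarrow> 'v set \<Rightarrow> real \<times> real \<Rightarrow> bool" where
  "resolvent_point RJ T W z \<longleftrightarrow>
     invertible_op (pencil RJ T z) \<and> W \<subseteq> pow_commuting (inv (pencil RJ T z)) RJ"

lemma resolvent_pointD:
  assumes "resolvent_point RJ T W z"
  shows "invertible_op (pencil RJ T z)" and "bounded_linear (inv (pencil RJ T z))"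
  using assms invertible_opD(1) by (auto simp: resolvent_point_def)

locale slice_pencil =
  fixes RJ :: "'v::banach \<Rightarrow> 'v" and T :: "'v \<Rightarrow> 'v"
  assumes bounded_linear_RJ: "bounded_linear RJ" and RJ_RJ: "\<And>w. RJ (RJ w) = - w"
    and bounded_linear_T: "bounded_linear T"
begin

abbreviation res :: "real \<times> real \<Rightarrow> 'v \<Rightarrow> 'v" where
  "res z \<equiv> inv (pencil RJ T z)"

lemma linear_RJ: "linear RJ"
  using bounded_linear_RJ by (rule bounded_linear.linear)

lemma bounded_linear_cmult: "bounded_linear (cmult RJ k)"
  unfolding cmult_def
  by (intro bounded_linear_add bounded_linear_compose[OF bounded_linear_scaleR_right bounded_linear_RJ]
      bounded_linear_scaleR_right bounded_linear_ident)

lemma bounded_linear_cmult_left: "bounded_linear (\<lambda>k. cmult RJ k w)"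
  unfolding cmult_def
  by (intro bounded_linear_add bounded_linear_compose[OF bounded_linear_scaleR_left bounded_linear_fst]
      bounded_linear_compose[OF bounded_linear_scaleR_left bounded_linear_snd])

lemma cmult_RJ: "cmult RJ k (RJ w) = RJ (cmult RJ k w)"
  by (simp add: cmult_def linear_add[OF linear_RJ] linear_scale[OF linear_RJ])

lemma pencil_shift: "pencil RJ T z' = (\<lambda>w. pencil RJ T z w + cmult RJ (z' - z) w)"
  by (auto simp: fun_eq_iff pencil_def cmult_def algebra_simps)

lemma norm_cmult_le: "norm (cmult RJ k w) \<le> (1 + onorm RJ) * norm k * norm w"
proof -
  have k: "\<bar>fst k\<bar> \<le> norm k" "\<bar>snd k\<bar> \<le> norm k"
    using norm_fst_le[of "fst k" "snd k"] norm_snd_le[of "snd k" "fst k"] by simp_all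
  have "norm (cmult RJ k w) \<le> \<bar>fst k\<bar> * norm w + \<bar>snd k\<bar> * norm (RJ w)"
    unfolding cmult_def using norm_triangle_ineq[of "fst k *\<^sub>R w" "snd k *\<^sub>R RJ w"] by simp
  also have "\<dots> \<le> norm k * norm w + norm k * (onorm RJ * norm w)"
    using onorm[OF bounded_linear_RJ, of w]
    by (intro add_mono mult_mono k) auto
  finally show ?thesis
    by (simp add: algebra_simps)
qed

lemma resolvent_point_near:
  assumes z: "resolvent_point RJ T W z"
    and M: "\<And>w. norm (res z w) \<le> M * norm w" "0 \<le> M"
    and near: "M * ((1 + onorm RJ) * norm (z' - z)) \<le> 1/2"
  shows "resolvent_point RJ T W z'" and "norm (res z' w) \<le> 2 * M * norm w"
proof -
  define D where "D = cmult RJ (z' - z)"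
  define G where "G = pow_commuting (res z) RJ"
  have shift: "pencil RJ T z' = (\<lambda>w. pencil RJ T z w + D w)"
    unfolding D_def by (rule pencil_shift)
  have Dd: "norm (D w) \<le> ((1 + onorm RJ) * norm (z' - z)) * norm w" for w
    unfolding D_def by (rule norm_cmult_le)
  interpret small_perturbation "pencil RJ T z" D M "(1 + onorm RJ) * norm (z' - z)"
    by (rule small_perturbation.intro[OF resolvent_pointD(1)[OF z]
          bounded_linear_cmult[of "z' - z", folded D_def] M(1) Dd near M(2)])
  show "norm (res z' w) \<le> 2 * M * norm w"
    unfolding shift by (rule norm_inv_add_le)
  note bS = resolvent_pointD(2)[OF z]
  have G: "closed G" "subspace G" "res z ` G \<subseteq> G" "RJ ` G \<subseteq> G"
    unfolding G_def
    by (fact closed_pow_commuting[OF bS bounded_linear_RJ] subspace_pow_commuting[OF bS linear_RJ]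
        pow_commuting_image_self pow_commuting_image_anti_involution[OF bS linear_RJ RJ_RJ])+
  have DG: "D ` G \<subseteq> G"
  proof (rule image_subsetI)
    fix u assume "u \<in> G"
    moreover from this have "RJ u \<in> G"
      using G(4) by blast
    ultimately show "D u \<in> G"
      unfolding D_def cmult_def using G(2) by (intro subspace_add subspace_scale)
  qed
  have SR: "res z (RJ u) = RJ (res z u)" if "u \<in> G" for u
    using that unfolding G_def by (rule pow_commuting_commute)
  have DR: "D (RJ u) = RJ (D u)" for u
    unfolding D_def by (rule cmult_RJ)
  have "W \<subseteq> G"
    using z by (simp add: resolvent_point_def G_def)
  also have "G \<subseteq> pow_commuting (res z') RJ"
    unfolding shift
  proof (rule subset_pow_commuting[OF image_subsetI])
    fix u assume "u \<in> G"
    note commute = inv_add_commute[where R = RJ and G = G and y = u]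
    show "inv (\<lambda>w. pencil RJ T z w + D w) u \<in> G"
      by (rule commute(1)[OF linear_RJ G(1-3) DG G(4) SR DR \<open>u \<in> G\<close>])
    show "inv (\<lambda>w. pencil RJ T z w + D w) (RJ u) = RJ (inv (\<lambda>w. pencil RJ T z w + D w) u)"
      by (rule commute(2)[OF linear_RJ G(1-3) DG G(4) SR DR \<open>u \<in> G\<close>])
  qed
  finally show "resolvent_point RJ T W z'"
    using invertible_op_add by (simp add: resolvent_point_def shift)
qed

lemma resolvent_point_nhd:
  assumes z: "resolvent_point RJ T W z"
  obtains e M where "0 < e" and "0 < M" and "\<And>w. norm (res z w) \<le> M * norm w"
    and "\<And>z'. dist z' z < e \<Longrightarrow> resolvent_point RJ T W z'"
    and "\<And>z' w. dist z' z < e \<Longrightarrow> norm (res z' w) \<le> 2 * M * norm w"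
proof -
  obtain M where M: "0 < M" "\<And>w. norm (res z w) \<le> M * norm w"
    using bounded_linear.pos_bounded[OF resolvent_pointD(2)[OF z]] by (auto simp: mult.commute)
  define c where "c = 1 + onorm RJ"
  have c: "0 < c"
    using onorm_pos_le[OF bounded_linear_RJ] by (simp add: c_def)
  define e where "e = 1 / (2 * M * c)"
  have e: "0 < e"
    using M c by (simp add: e_def)
  have near: "M * (c * norm (z' - z)) \<le> 1/2" if "dist z' z < e" for z'
  proof -
    have "M * (c * norm (z' - z)) \<le> M * (c * e)"
      using that M c by (simp add: dist_norm)
    also have "\<dots> = 1/2"
      using M c by (simp add: e_def)
    finally show ?thesis .
  qed
  show ?thesis
    using that[OF e M] resolvent_point_near[OF z M(2) less_imp_le[OF M(1)] near[unfolded c_def]]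
    by blast
qed

lemma open_resolvent_points: "open {z. resolvent_point RJ T W z}"
  unfolding open_dist
proof
  fix z assume "z \<in> {z. resolvent_point RJ T W z}"
  then show "\<exists>e>0. \<forall>z'. dist z' z < e \<longrightarrow> z' \<in> {z. resolvent_point RJ T W z}"
    by (elim CollectE resolvent_point_nhd) blast
qed

lemma res_diff:
  assumes "resolvent_point RJ T W z" and "resolvent_point RJ T W z'"
  shows "res z' w = res z w - res z' (cmult RJ (z' - z) (res z w))"
  unfolding pencil_shift[of z' z]
  by (rule inv_add_eq[OF resolvent_pointD(1)[OF assms(1)]
        resolvent_pointD(1)[OF assms(2), unfolded pencil_shift[of z' z]]])

lemma res_RJ_res:
  assumes "resolvent_point RJ T W z" and "v \<in> W"
  shows "res z (RJ (res z v)) = RJ (res z (res z v))"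
proof -
  have "v \<in> pow_commuting (res z) RJ"
    using assms unfolding resolvent_point_def by blast
  then have "res z v \<in> pow_commuting (res z) RJ"
    by (rule subsetD[OF pow_commuting_image_self imageI])
  then show ?thesis
    by (rule pow_commuting_commute)
qed

lemma has_derivative_res:
  assumes z: "resolvent_point RJ T W z"
  shows "((\<lambda>z'. res z' w) has_derivative (\<lambda>k. - res z (cmult RJ k (res z w)))) (at z)"
proof -
  obtain e M where e: "0 < e" and M: "0 < M" "\<And>w. norm (res z w) \<le> M * norm w"
    and near: "\<And>z'. dist z' z < e \<Longrightarrow> resolvent_point RJ T W z'"
    and bound: "\<And>z' w. dist z' z < e \<Longrightarrow> norm (res z' w) \<le> 2 * M * norm w"
    using resolvent_point_nhd[OF z] by blast
  define c where "c = 1 + onorm RJ"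
  have c: "0 \<le> c"
    using onorm_pos_le[OF bounded_linear_RJ] by (simp add: c_def)
  have step: "norm (res z (cmult RJ h u)) \<le> M * (c * norm h * norm u)" for h u
    using M(2) norm_cmult_le[of h u] M(1) unfolding c_def by (meson less_imp_le mult_left_mono order_trans)
  have L: "bounded_linear (\<lambda>k. - res z (cmult RJ k (res z w)))"
    by (intro bounded_linear_minus bounded_linear_compose[OF resolvent_pointD(2)[OF z]]
        bounded_linear_cmult_left)
  show ?thesis
  proof (rule has_derivative_of_quadratic_remainder[OF L e])
    fix h :: "real \<times> real"
    assume h: "norm h < e"
    then have zh: "dist (z + h) z < e"
      by (simp add: dist_norm)
    define x where "x = cmult RJ h (res z w)"
    have "res (z + h) w - res z w - - res z x = res z x - res (z + h) x"
      using res_diff[OF z near[OF zh], of w] by (simp add: x_def)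
    also have "\<dots> = res (z + h) (cmult RJ h (res z x))"
      using res_diff[OF z near[OF zh], of x] by simp
    also have "norm \<dots> \<le> 2 * M * (c * norm h * norm (res z x))"
      using bound[OF zh] norm_cmult_le[of h "res z x"] M(1) unfolding c_def
      by (meson less_imp_le mult_left_mono order_trans zero_le_mult_iff zero_le_numeral)
    also have "\<dots> \<le> 2 * M * (c * norm h * (M * (c * norm h * norm (res z w))))"
      using step[of h "res z w"] M(1) c unfolding x_def
      by (intro mult_left_mono) auto
    also have "\<dots> \<le> 2 * M * (c * norm h * (M * (c * norm h * (M * norm w))))"
      using M c by (intro mult_left_mono) auto
    finally show "norm (res (z + h) w - res z w - - res z (cmult RJ h (res z w)))
        \<le> (2 * M * c * c * M * M * norm w) * (norm h)\<^sup>2"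
      by (simp add: x_def power2_eq_square mult_ac)
  qed
qed

lemma isCont_res_apply:
  assumes z: "resolvent_point RJ T W z" and f: "isCont f z"
  shows "isCont (\<lambda>z'. res z' (f z')) z"
proof -
  obtain e M where e: "0 < e" and near: "\<And>z'. dist z' z < e \<Longrightarrow> resolvent_point RJ T W z'"
    and bound: "\<And>z' w. dist z' z < e \<Longrightarrow> norm (res z' w) \<le> 2 * M * norm w"
    using resolvent_point_nhd[OF z] by metis
  have split: "res z' (f z' - f z) + (res z' (f z) - res z (f z)) = res z' (f z') - res z (f z)"
    if "dist z' z < e" for z'
    using linear_diff[OF bounded_linear.linear[OF resolvent_pointD(2)[OF near[OF that]]]] by simp
  have "((\<lambda>z'. res z' (f z) - res z (f z)) \<longlongrightarrow> 0) (at z)"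
    using has_derivative_continuous[OF has_derivative_res[OF z]] by (simp add: isCont_def LIM_zero)
  moreover have "((\<lambda>z'. res z' (f z' - f z)) \<longlongrightarrow> 0) (at z)"
  proof (rule Lim_null_comparison)
    show "\<forall>\<^sub>F z' in at z. norm (res z' (f z' - f z)) \<le> 2 * M * norm (f z' - f z)"
      unfolding eventually_at using e bound by blast
    show "((\<lambda>z'. 2 * M * norm (f z' - f z)) \<longlongrightarrow> 0) (at z)"
      using f unfolding isCont_def by (intro tendsto_mult_right_zero tendsto_norm_zero LIM_zero)
  qed
  ultimately have "((\<lambda>z'. res z' (f z' - f z) + (res z' (f z) - res z (f z))) \<longlongrightarrow> 0) (at z)"
    using tendsto_add by fastforce
  moreover have "\<forall>\<^sub>F z' in at z. res z' (f z' - f z) + (res z' (f z) - res z (f z))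
      = res z' (f z') - res z (f z)"
    unfolding eventually_at using e split by blast
  ultimately have "((\<lambda>z'. res z' (f z') - res z (f z)) \<longlongrightarrow> 0) (at z)"
    by (rule Lim_transform_eventually)
  then show ?thesis
    by (simp add: isCont_def LIM_zero_iff)
qed

lemma functional_res_continuously_differentiable:
  fixes \<phi> :: "'v \<Rightarrow> 'b::real_normed_vector"
  assumes \<phi>: "bounded_linear \<phi>"
  obtains G' :: "real \<times> real \<Rightarrow> (real \<times> real) \<Rightarrow>\<^sub>L 'b" where
    "\<And>z. resolvent_point RJ T W z \<Longrightarrow> ((\<lambda>z. \<phi> (res z w)) has_derivative blinfun_apply (G' z)) (at z)"
    and "continuous_on {z. resolvent_point RJ T W z} G'"
    and "\<And>z k. resolvent_point RJ T W z \<Longrightarrow> G' z k = - \<phi> (res z (cmult RJ k (res z w)))"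
proof -
  define D where "D z k = - \<phi> (res z (cmult RJ k (res z w)))" for z k
  have app: "blinfun_apply (Blinfun (D z)) = D z" if "resolvent_point RJ T W z" for z
  proof (rule bounded_linear_Blinfun_apply)
    show "bounded_linear (D z)"
      unfolding D_def
      using bounded_linear_minus[OF bounded_linear_compose[OF \<phi>
            bounded_linear_compose[OF resolvent_pointD(2)[OF that] bounded_linear_cmult_left]]] .
  qed
  have isCont_D: "isCont (\<lambda>z. D z k) z" if "resolvent_point RJ T W z" for z k
  proof -
    have "isCont (\<lambda>z. res z w) z"
      using isCont_res_apply[OF that continuous_const] .
    then have "isCont (\<lambda>z. res z (cmult RJ k (res z w))) z"
      using isCont_res_apply[OF that bounded_linear.isCont[OF bounded_linear_cmult]] by blast
    then show ?thesis
      unfolding D_def by (intro isCont_minus bounded_linear.isCont[OF \<phi>])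
  qed
  show ?thesis
  proof (rule that[of "\<lambda>z. Blinfun (D z)"])
    fix z assume z: "resolvent_point RJ T W z"
    show "((\<lambda>z. \<phi> (res z w)) has_derivative blinfun_apply (Blinfun (D z))) (at z)"
      using bounded_linear.has_derivative[OF \<phi> has_derivative_res[OF z, of w]]
      by (rule has_derivative_eq_rhs)
        (simp add: app[OF z] D_def fun_eq_iff linear_neg[OF bounded_linear.linear[OF \<phi>]])
    show "Blinfun (D z) k = - \<phi> (res z (cmult RJ k (res z w)))" for k
      by (simp add: app[OF z] D_def)
  next
    show "continuous_on {z. resolvent_point RJ T W z} (\<lambda>z. Blinfun (D z))"
    proof (rule continuous_on_blinfun_componentwise)
      fix i :: "real \<times> real"
      have "continuous_on {z. resolvent_point RJ T W z} (\<lambda>z. D z i)"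
        by (intro continuous_at_imp_continuous_on ballI isCont_D) simp
      then show "continuous_on {z. resolvent_point RJ T W z} (\<lambda>z. blinfun_apply (Blinfun (D z)) i)"
        by (rule continuous_on_cong[THEN iffD1, rotated 2]) (simp_all add: app)
    qed
  qed
qed

end

section \<open>Octonionic bimodules\<close>

context
  fixes lm :: "oct \<Rightarrow> 'v::real_vector \<Rightarrow> 'v" and rm :: "'v \<Rightarrow> oct \<Rightarrow> 'v"
  assumes bimodule: "oct_bimodule lm rm"
begin

lemma linear_lm: "linear (lm p)"
  and linear_rm: "linear (\<lambda>x. rm x p)"
  and linear_rm_oct: "linear (rm x)"
  and rm_oone: "rm x oone = x"
  using bimodule unfolding oct_bimodule_def by blast+

lemma associators:
  "assocL lm p q x = assocM lm rm q x p" "assocM lm rm q x p = assocR rm x p q"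
  "assocR rm x p q = - assocL lm q p x"
  using bimodule unfolding oct_bimodule_def by blast+

lemma rm_right_alternative: "rm (rm x p) p = rm x (omul p p)"
proof -
  have "assocR rm x p p = - assocR rm x p p"
    using associators[where p=p and q=p] by metis
  then have "assocR rm x p p = 0"
    by (metis add.right_inverse scaleR_2 scale_eq_0_iff zero_neq_numeral)
  then show ?thesis
    unfolding assocR_def by simp
qed

lemma ReM_lm_eq_rm: "d \<in> ReM lm rm \<Longrightarrow> lm p d = rm d p"
  unfolding ReM_def by blast

lemma ReM_rm_rm:
  assumes "d \<in> ReM lm rm"
  shows "rm (rm d p) q = rm d (omul p q)"
proof -
  have "assocL lm q p d = 0"
    using assms unfolding ReM_def by blast
  then have "assocR rm d p q = 0"
    using associators(3)[where p=p and q=q and x=d] by simp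
  then show ?thesis
    unfolding assocR_def by simp
qed

lemma ReM_lm_rm:
  assumes d: "d \<in> ReM lm rm"
  shows "lm q (rm d p) = rm d (omul q p)"
proof -
  have "assocL lm p q d = 0"
    using d unfolding ReM_def by blast
  then have "assocM lm rm q d p = 0"
    using associators(1)[where p=p and q=q and x=d] by simp
  then have "lm q (rm d p) = rm (lm q d) p"
    unfolding assocM_def by simp
  also have "\<dots> = rm d (omul q p)"
    using ReM_lm_eq_rm[OF d] ReM_rm_rm[OF d] by simp
  finally show ?thesis .
qed

lemma ReM_zero: "0 \<in> ReM lm rm"
  by (simp add: ReM_def assocL_def linear_0[OF linear_lm] linear_0[OF linear_rm])

lemma ReM_diff:
  assumes "a \<in> ReM lm rm" and "b \<in> ReM lm rm"
  shows "a - b \<in> ReM lm rm"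
  using assms
  by (simp add: ReM_def assocL_def linear_diff[OF linear_lm] linear_diff[OF linear_rm] algebra_simps)

definition coord_proj :: "nat \<Rightarrow> 'v \<Rightarrow> 'v" where
  "coord_proj k x = (\<Sum>j<8. lm (oe j) (rm (rm x (ocnj (oe k))) (ocnj (oe j))))
                    + 4 *\<^sub>R rm x (ocnj (oe k))"

lemma linear_coord_proj: "linear (coord_proj k)"
proof -
  have "linear (\<lambda>x. lm a (rm (rm x b) c))" for a b c
    using linear_compose[OF linear_compose[OF linear_rm linear_rm] linear_lm] by (simp add: o_def)
  then show ?thesis
    unfolding coord_proj_def
    by (intro linear_compose_add linear_compose_sum linear_compose_scale_right ballI linear_rm)
qed

lemma coord_proj_rm_oe:
  assumes d: "d \<in> ReM lm rm" and "i < 8" and "k < 8"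
  shows "coord_proj k (rm d (oe i)) = (if i = k then 12 else 0) *\<^sub>R d"
proof -
  have "coord_proj k (rm d (oe i))
      = rm d ((\<Sum>j<8. omul (oe j) (omul (omul (oe i) (ocnj (oe k))) (ocnj (oe j))))
              + 4 *\<^sub>R omul (oe i) (ocnj (oe k)))"
    unfolding coord_proj_def
    by (simp add: ReM_rm_rm[OF d] ReM_lm_rm[OF d] linear_add[OF linear_rm_oct]
          linear_scale[OF linear_rm_oct] linear_sum[OF linear_rm_oct])
  also have "\<dots> = rm d ((if i = k then 12 else 0) *\<^sub>R oone)"
    by (simp only: oe_twelve_re[OF assms(2,3)])
  finally show ?thesis
    by (simp add: linear_scale[OF linear_rm_oct] rm_oone)
qed

lemma ReM_coords_unique:
  assumes c: "\<forall>i<8. c i \<in> ReM lm rm" and c': "\<forall>i<8. c' i \<in> ReM lm rm"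
    and eq: "(\<Sum>i<8. rm (c i) (oe i)) = (\<Sum>i<8. rm (c' i) (oe i))" and k: "k < 8"
  shows "c k = c' k"
proof -
  define d where "d i = c i - c' i" for i
  have d: "d i \<in> ReM lm rm" if "i < 8" for i
    using c c' that ReM_diff by (simp add: d_def)
  have "(\<Sum>i<8. rm (d i) (oe i)) = 0"
    using eq by (simp add: d_def linear_diff[OF linear_rm] sum_subtractf)
  then have "0 = (\<Sum>i<8. coord_proj k (rm (d i) (oe i)))"
    by (metis linear_0[OF linear_coord_proj] linear_sum[OF linear_coord_proj])
  also have "\<dots> = (\<Sum>i<8. (if i = k then 12 else 0) *\<^sub>R d i)"
    by (rule sum.cong) (simp_all add: coord_proj_rm_oe[OF d] k)
  also have "\<dots> = 12 *\<^sub>R d k"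
    using k by (simp add: if_distrib[of "\<lambda>r. r *\<^sub>R _"] cong: if_cong)
  finally show ?thesis
    by (simp add: d_def)
qed

lemma comps_ReM:
  assumes v: "v \<in> ReM lm rm"
  shows "comps lm rm v = (\<lambda>i. if i = 0 then v else 0)"
proof -
  let ?c = "\<lambda>i::nat. if i = 0 then v else 0"
  have c: "\<forall>i<8. ?c i \<in> ReM lm rm"
    using v ReM_zero by simp
  have "(\<Sum>i<8. rm (?c i) (oe i)) = (\<Sum>i<(8::nat). if i = 0 then v else 0)"
    by (rule sum.cong) (simp_all add: oe_0 rm_oone linear_0[OF linear_rm])
  then have sum: "v = (\<Sum>i<8. rm (?c i) (oe i))"
    by simp
  show ?thesis
    unfolding comps_def
  proof (rule the_equality)
    show "(\<forall>i<8. ?c i \<in> ReM lm rm) \<and> (\<forall>i\<ge>8. ?c i = 0) \<and> v = (\<Sum>i<8. rm (?c i) (oe i))"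
      using c sum by simp
  next
    fix c'
    assume c': "(\<forall>i<8. c' i \<in> ReM lm rm) \<and> (\<forall>i\<ge>8. c' i = 0) \<and> v = (\<Sum>i<8. rm (c' i) (oe i))"
    show "c' = ?c"
    proof
      fix i
      show "c' i = ?c i"
      proof (cases "i < 8")
        case True
        then show ?thesis
          using ReM_coords_unique[OF _ c _ True, of c'] c' sum by argo
      next
        case False
        then show ?thesis
          using c' by simp
      qed
    qed
  qed
qed

lemma circ_inv_ReM:
  assumes "v \<in> ReM lm rm" and "linear (inv A)"
  shows "circ_inv lm rm A v = inv A v"
proof -
  have "circ_inv lm rm A v = (\<Sum>i<(8::nat). if i = 0 then inv A v else 0)"
    unfolding circ_inv_def ext_op_def comps_ReM[OF assms(1)]
    by (rule sum.cong) (simp_all add: linear_0[OF assms(2)] linear_0[OF linear_rm] oe_0 rm_oone)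
  then show ?thesis
    by simp
qed

end

section \<open>Right slice regularity of the resolvent\<close>

lemma rm_slice:
  assumes "oct_bimodule lm rm"
  shows "rm w (x *\<^sub>R oone + y *\<^sub>R J) = cmult (\<lambda>w. rm w J) (x, y) w"
  by (simp add: cmult_def linear_add[OF linear_rm_oct[OF assms]] linear_scale[OF linear_rm_oct[OF assms]]
      rm_oone[OF assms])

lemma rm_slice_minus_eq_pencil:
  assumes "oct_bimodule lm rm"
  shows "(\<lambda>w. rm w (x *\<^sub>R oone + y *\<^sub>R J) - T w) = pencil (\<lambda>w. rm w J) T (x, y)"
  by (simp add: fun_eq_iff pencil_def rm_slice[OF assms])

lemma CJ_ext_pow_assoc_iff:
  assumes bimodule: "oct_bimodule lm rm" and S: "bounded_linear S"
  shows "CJ_ext_pow_assoc lm rm J S \<longleftrightarrow> ReM lm rm \<subseteq> pow_commuting S (\<lambda>w. rm w J)"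
proof
  assume ext: "CJ_ext_pow_assoc lm rm J S"
  have "J = 0 *\<^sub>R oone + 1 *\<^sub>R J"
    by simp
  then have "J \<in> CJ J"
    unfolding CJ_def by blast
  then have "(S ^^ n) (rm w J) = rm ((S ^^ n) w) J" if "w \<in> ReM lm rm" for w n
  proof (cases "n = 0")
    case False
    then have "1 \<le> n"
      by simp
    with ext that \<open>J \<in> CJ J\<close> show ?thesis
      unfolding CJ_ext_pow_assoc_def by blast
  qed simp
  then show "ReM lm rm \<subseteq> pow_commuting S (\<lambda>w. rm w J)"
    unfolding pow_commuting_def by blast
next
  assume commute: "ReM lm rm \<subseteq> pow_commuting S (\<lambda>w. rm w J)"
  note lSn = bounded_linear.linear[OF bounded_linear_funpow[OF S]]
  show "CJ_ext_pow_assoc lm rm J S"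
    unfolding CJ_ext_pow_assoc_def
  proof (intro allI impI ballI)
    fix n :: nat and w c
    assume "w \<in> ReM lm rm" and "c \<in> CJ J"
    moreover from \<open>c \<in> CJ J\<close> obtain a b where "c = a *\<^sub>R oone + b *\<^sub>R J"
      unfolding CJ_def by blast
    ultimately show "(S ^^ n) (rm w c) = rm ((S ^^ n) w) c"
      using commute unfolding pow_commuting_def
      by (auto simp: rm_slice[OF bimodule] cmult_def linear_add[OF lSn] linear_scale[OF lSn])
  qed
qed

lemma rhoJ_iff_resolvent_point:
  assumes "oct_bimodule lm rm"
  shows "x *\<^sub>R oone + y *\<^sub>R J \<in> rhoJ lm rm T J
    \<longleftrightarrow> resolvent_point (\<lambda>w. rm w J) T (ReM lm rm) (x, y)"
proof -
  have "x *\<^sub>R oone + y *\<^sub>R J \<in> CJ J"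
    by (auto simp: CJ_def)
  then have "x *\<^sub>R oone + y *\<^sub>R J \<in> rhoJ lm rm T J \<longleftrightarrow> invertible_op (pencil (\<lambda>w. rm w J) T (x, y))
      \<and> CJ_ext_pow_assoc lm rm J (inv (pencil (\<lambda>w. rm w J) T (x, y)))"
    unfolding rhoJ_def mem_Collect_eq rm_slice_minus_eq_pencil[OF assms] by blast
  then show ?thesis
    unfolding resolvent_point_def using CJ_ext_pow_assoc_iff[OF assms invertible_opD(1)] by blast
qed

lemma slice_pencil_rm:
  assumes "banach_oct_bimodule lm rm" and "J \<in> osphere" and "bounded_linear T"
  shows "slice_pencil (\<lambda>w. rm w J) T"
proof (rule slice_pencil.intro)
  have bimodule: "oct_bimodule lm rm"
    using assms(1) by (simp add: banach_oct_bimodule_def)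
  have "norm (rm w J) = norm J * norm w" for w
    using assms(1) unfolding banach_oct_bimodule_def by blast
  then show "bounded_linear (\<lambda>w. rm w J)"
    by (intro bounded_linear_intro[where K = "norm J"])
      (simp_all add: linear_add[OF linear_rm[OF bimodule]] linear_scale[OF linear_rm[OF bimodule]]
        mult.commute)
  show "rm (rm w J) J = - w" for w
    using assms(2) by (simp add: rm_right_alternative[OF bimodule] osphere_def
        linear_neg[OF linear_rm_oct[OF bimodule]] rm_oone[OF bimodule])
  show "bounded_linear T"
    by fact
qed

lemma circ_inv_slice_ReM:
  assumes "oct_bimodule lm rm" and "v \<in> ReM lm rm"
    and "x *\<^sub>R oone + y *\<^sub>R J \<in> rhoJ lm rm T J"
  shows "circ_inv lm rm (\<lambda>w. rm w (x *\<^sub>R oone + y *\<^sub>R J) - T w) v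
    = inv (pencil (\<lambda>w. rm w J) T (x, y)) v"
proof -
  have "resolvent_point (\<lambda>w. rm w J) T (ReM lm rm) (x, y)"
    using assms(3) rhoJ_iff_resolvent_point[OF assms(1)] by blast
  then show ?thesis
    unfolding rm_slice_minus_eq_pencil[OF assms(1)]
    by (intro circ_inv_ReM[OF assms(1,2)] bounded_linear.linear resolvent_pointD(2))
qed

lemma right_slice_regular_resolvent:
  fixes \<phi> :: "'v::banach \<Rightarrow> oct"
  assumes "banach_oct_bimodule lm rm" and J: "J \<in> osphere" and "bounded_linear T"
    and v: "v \<in> ReM lm rm" and \<phi>: "\<phi> \<in> oct_dual lm rm"
  obtains G' :: "real \<times> real \<Rightarrow> (real \<times> real) \<Rightarrow>\<^sub>L oct" where
    "\<And>z. resolvent_point (\<lambda>w. rm w J) T (ReM lm rm) z \<Longrightarrow>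
      ((\<lambda>z. \<phi> (inv (pencil (\<lambda>w. rm w J) T z) v)) has_derivative blinfun_apply (G' z)) (at z)"
    and "continuous_on {z. resolvent_point (\<lambda>w. rm w J) T (ReM lm rm) z} G'"
    and "\<And>z. resolvent_point (\<lambda>w. rm w J) T (ReM lm rm) z \<Longrightarrow> G' z (1, 0) + omul (G' z (0, 1)) J = 0"
proof -
  interpret slice_pencil "\<lambda>w. rm w J" T
    using assms(1-3) by (rule slice_pencil_rm)
  have \<phi>_rm: "\<phi> (rm x p) = omul (\<phi> x) p" for x p
    using \<phi> unfolding oct_dual_def by blast
  obtain G' where G': "\<And>z. resolvent_point (\<lambda>w. rm w J) T (ReM lm rm) z \<Longrightarrow>
        ((\<lambda>z. \<phi> (res z v)) has_derivative blinfun_apply (G' z)) (at z)"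
      "continuous_on {z. resolvent_point (\<lambda>w. rm w J) T (ReM lm rm) z} G'"
      "\<And>z k. resolvent_point (\<lambda>w. rm w J) T (ReM lm rm) z \<Longrightarrow>
        G' z k = - \<phi> (res z (cmult (\<lambda>w. rm w J) k (res z v)))"
    using functional_res_continuously_differentiable[where W = "ReM lm rm" and w = v] \<phi>
    unfolding oct_dual_def by blast
  have "G' z (1, 0) + omul (G' z (0, 1)) J = 0" if z: "resolvent_point (\<lambda>w. rm w J) T (ReM lm rm) z" for z
  proof -
    have "G' z (0, 1) = - \<phi> (rm (res z (res z v)) J)"
      using res_RJ_res[OF z v] by (simp add: G'(3)[OF z] cmult_def)
    also have "\<dots> = omul (G' z (1, 0)) J"
      by (simp add: G'(3)[OF z] cmult_def \<phi>_rm omul_uminus_left)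
    finally show ?thesis
      by (simp add: omul_osphere_twice[OF J])
  qed
  with G'(1,2) show ?thesis
    by (rule that)
qed

theorem mainTheorem8:
  fixes lm :: "oct \<Rightarrow> 'v::banach \<Rightarrow> 'v" and rm :: "'v \<Rightarrow> oct \<Rightarrow> 'v"
    and T :: "'v \<Rightarrow> 'v" and v :: 'v and \<phi> :: "'v \<Rightarrow> oct" and J :: oct
    and g :: "oct \<Rightarrow> oct"
  assumes "banach_oct_bimodule lm rm"
    and "T \<in> BRO lm rm"
    and "v \<in> ReM lm rm"
    and "\<phi> \<in> oct_dual lm rm"
    and "\<forall>s\<in>rho lm rm T. g s = \<phi> (circ_inv lm rm (\<lambda>w. rm w s - T w) v)"
    and "J \<in> osphere"
  shows "open {(x, y). x *\<^sub>R oone + y *\<^sub>R J \<in> rhoJ lm rm T J} \<and>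
    (\<exists>G' :: real \<times> real \<Rightarrow> (real \<times> real) \<Rightarrow>\<^sub>L oct.
       (\<forall>z\<in>{(x, y). x *\<^sub>R oone + y *\<^sub>R J \<in> rhoJ lm rm T J}.
          ((\<lambda>(x, y). g (x *\<^sub>R oone + y *\<^sub>R J)) has_derivative blinfun_apply (G' z)) (at z)) \<and>
       continuous_on {(x, y). x *\<^sub>R oone + y *\<^sub>R J \<in> rhoJ lm rm T J} G' \<and>
       (\<forall>z\<in>{(x, y). x *\<^sub>R oone + y *\<^sub>R J \<in> rhoJ lm rm T J}.
          G' z (1, 0) + omul (G' z (0, 1)) J = 0))"
proof -
  have bimodule: "oct_bimodule lm rm"
    using assms(1) by (simp add: banach_oct_bimodule_def)
  have T: "bounded_linear T"
    using assms(2) by (simp add: BRO_def)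
  interpret slice_pencil "\<lambda>w. rm w J" T
    using assms(1,6) T by (rule slice_pencil_rm)
  let ?P = "resolvent_point (\<lambda>w. rm w J) T (ReM lm rm)"
  let ?U = "{(x, y). x *\<^sub>R oone + y *\<^sub>R J \<in> rhoJ lm rm T J}"
  have U: "?U = {z. ?P z}"
    using rhoJ_iff_resolvent_point[OF bimodule] by auto
  have g: "\<phi> (res z v) = (\<lambda>(x, y). g (x *\<^sub>R oone + y *\<^sub>R J)) z" if "z \<in> ?U" for z
  proof (cases z)
    case (Pair x y)
    with that assms(6) have "x *\<^sub>R oone + y *\<^sub>R J \<in> rho lm rm T"
      by (auto simp: rho_def)
    with that Pair show ?thesis
      using assms(5) circ_inv_slice_ReM[OF bimodule assms(3)] by simp
  qed
  obtain G' where G': "\<And>z. ?P z \<Longrightarrow> ((\<lambda>z. \<phi> (res z v)) has_derivative blinfun_apply (G' z)) (at z)"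
    "continuous_on {z. ?P z} G'" "\<And>z. ?P z \<Longrightarrow> G' z (1, 0) + omul (G' z (0, 1)) J = 0"
    using right_slice_regular_resolvent[OF assms(1,6) T assms(3,4)] by blast
  have "((\<lambda>(x, y). g (x *\<^sub>R oone + y *\<^sub>R J)) has_derivative blinfun_apply (G' z)) (at z)"
    if "z \<in> ?U" for z
    using that g unfolding U
    by (intro has_derivative_transform_within_open[OF G'(1) open_resolvent_points]) auto
  with G'(2,3) open_resolvent_points show ?thesis
    unfolding U by blast
qed

end
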